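(* Let $\mathcal{X},\mathcal{Y}$ be $\mathbb{F}$-linear locally convex spaces with systems of seminorms $\{\|\cdot\|_\alpha\}_{\alpha\in\aleph}$ and $\{\|\cdot\|_\beta\}_{\beta\in\beth}$, and let $\{\operatorname{T}_\epsilon\}_{\epsilon\in(0,1)}$ be a net of continuous linear operators $\mathcal{X}\to\mathcal{Y}$. Suppose that for every $\beta\in\beth$ there exist $\ell_\beta\in\Upsilon$ and a finite set $A_\beta\subset\aleph$ such that $\varsigma_{\ell_\beta}(\epsilon)\|\operatorname{T}_\epsilon\|_{\beta,A_\beta}=o(1)$ as $\epsilon\to0$, where $$\|\operatorname{T}_\epsilon\|_{\beta,A_\beta}=\sup\{\|\operatorname{T}_\epsilon h\|_\beta:\ h\in\mathcal{X},\ \max_{\alpha\in A_\beta}\|h\|_\alpha\le1\}.$$ Then $\operatorname{T}[h_\epsilon]_{\epsilon\in(0,1)}=[\operatorname{T}_\epsilon h_\epsilon]_{\epsilon\in(0,1)}$ is a well-defined $\widetilde{\mathbb{F}}^\mho$-linear map $\mathcal{G}^\mho(\mathcal{X})\to\mathcal{G}^\mho(\mathcal{Y})$ which is continuous for the $\mho$-sharp topologies.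
   Context: $\mathbb{F}\in\{\mathbb{R},\mathbb{C}\}$. An asymptotic scale is a family $\mho=\{\varsigma_\ell\}_{\ell\in\Upsilon}\subset C((0,1),\mathbb{R}_+)$ indexed by a non-empty directed set $(\Upsilon,\prec)$, each $\varsigma_\ell$ increasing in a neighbourhood of $0$, such that (i) $\ell\prec\jmath$ implies $\varsigma_\ell(\epsilon)=o(\varsigma_\jmath(\epsilon))$ as $\epsilon\to0$, and (ii) for all $\ell,\jmath\in\Upsilon$ there is $\hbar\in\Upsilon$ with $\varsigma_\hbar(\epsilon)=o(\varsigma_\ell(\epsilon)\varsigma_\jmath(\epsilon))$ as $\epsilon\to0$. For a locally convex space $\mathcal{X}$ with seminorms $\{\|\cdot\|_\alpha\}_{\alpha\in\aleph}$: a net $\{h_\epsilon\}_{\epsilon\in(0,1)}\subset\mathcal{X}$ is $\mho$-moderate if for every $\alpha$ there is $\ell_\alpha\in\Upsilon$ with $\varsigma_{\ell_\alpha}(\epsilon)\|h_\epsilon\|_\alpha=o(1)$; it is $\mho$-negligible if $\|h_\epsilon\|_\alpha=o(\varsigma_\ell(\epsilon))$ for all $\alpha\in\aleph$, $\ell\in\Upsilon$. $\mathcal{G}^\mho(\mathcal{X})=\mathcal{M}^\mho(\mathcal{X})/\mathcal{N}^\mho(\mathcal{X})$ (moderate nets modulo negligible nets), with classes written $[h_\epsilon]_{\epsilon\in(0,1)}$; $\widetilde{\mathbb{F}}^\mho=\mathcal{G}^\mho(\mathbb{F})$ is the ring of generalised scalars (componentwise product), and $\mathcal{G}^\mho(\mathcal{X})$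 is an $\widetilde{\mathbb{F}}^\mho$-module under componentwise action. The $\mho$-sharp topology on $\mathcal{G}^\mho(\mathcal{X})$ has as a basis of neighbourhoods of $0$ the sets $U_{\alpha,\ell}=\{[h_\epsilon]:\|h_\epsilon\|_\alpha=o(\varsigma_\ell(\epsilon))\text{ as }\epsilon\to0\}$, $\alpha\in\aleph$, $\ell\in\Upsilon$. *)

theory Defs
  imports "HOL-Analysis.Analysis" "HOL-Library.Landau_Symbols"
begin

text \<open>Asymptotic scale: a family sigma indexed by a directed set (relation prec).
  Nets are functions real => X; only the values on (0,1) matter, limits are at_right 0.\<close>

definition asymptotic_scale :: "('l \<Rightarrow> 'l \<Rightarrow> bool) \<Rightarrow> ('l \<Rightarrow> real \<Rightarrow> real) \<Rightarrow> bool" where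
  "asymptotic_scale prec \<sigma> \<longleftrightarrow>
     (\<forall>a b c. prec a b \<longrightarrow> prec b c \<longrightarrow> prec a c) \<and>
     (\<forall>a b. \<exists>c. prec a c \<and> prec b c) \<and>
     (\<forall>l. continuous_on {0<..<1} (\<sigma> l) \<and> (\<forall>e\<in>{0<..<1}. \<sigma> l e > 0) \<and>
          (\<exists>d. 0 < d \<and> d \<le> 1 \<and> mono_on {0<..<d} (\<sigma> l))) \<and>
     (\<forall>l j. prec l j \<longrightarrow> \<sigma> l \<in> o[at_right 0](\<sigma> j)) \<and>
     (\<forall>l j. \<exists>h. \<sigma> h \<in> o[at_right 0](\<lambda>e. \<sigma> l e * \<sigma> j e))"

definition seminorm_on :: "('f::real_normed_field \<Rightarrow> 'x::ab_group_add \<Rightarrow> 'x) \<Rightarrow> ('x \<Rightarrow> real) \<Rightarrow> bool" where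
  "seminorm_on sc p \<longleftrightarrow> (\<forall>x y c. 0 \<le> p x \<and> p (x + y) \<le> p x + p y \<and> p (sc c x) = norm c * p x)"

definition lcs :: "('f::real_normed_field \<Rightarrow> 'x::ab_group_add \<Rightarrow> 'x) \<Rightarrow> ('a \<Rightarrow> 'x \<Rightarrow> real) \<Rightarrow> bool" where
  "lcs sc p \<longleftrightarrow> Vector_Spaces.vector_space sc \<and> (\<forall>a. seminorm_on sc (p a))"

definition lc_top :: "('a \<Rightarrow> 'x::ab_group_add \<Rightarrow> real) \<Rightarrow> 'x topology" where
  "lc_top p = topology_generated_by
     {{y. \<forall>a\<in>A. p a (y - x) < r} | x A r. finite A \<and> 0 < r}"

definition moderate :: "('a \<Rightarrow> 'x \<Rightarrow> real) \<Rightarrow> ('l \<Rightarrow> real \<Rightarrow> real) \<Rightarrow> (real \<Rightarrow> 'x) \<Rightarrow> bool" where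
  "moderate p \<sigma> h \<longleftrightarrow> (\<forall>a. \<exists>l. (\<lambda>e. \<sigma> l e * p a (h e)) \<in> o[at_right 0](\<lambda>_. 1))"

definition negligible :: "('a \<Rightarrow> 'x \<Rightarrow> real) \<Rightarrow> ('l \<Rightarrow> real \<Rightarrow> real) \<Rightarrow> (real \<Rightarrow> 'x) \<Rightarrow> bool" where
  "negligible p \<sigma> h \<longleftrightarrow> (\<forall>a l. (\<lambda>e. p a (h e)) \<in> o[at_right 0](\<sigma> l))"

definition gclass :: "('a \<Rightarrow> 'x::ab_group_add \<Rightarrow> real) \<Rightarrow> ('l \<Rightarrow> real \<Rightarrow> real) \<Rightarrow> (real \<Rightarrow> 'x) \<Rightarrow> (real \<Rightarrow> 'x) set" where
  "gclass p \<sigma> h = {g. moderate p \<sigma> g \<and> negligible p \<sigma> (\<lambda>e. g e - h e)}"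

text \<open>The space G(X) = M(X)/N(X), as the set of classes of moderate nets.\<close>
definition gspace :: "('a \<Rightarrow> 'x::ab_group_add \<Rightarrow> real) \<Rightarrow> ('l \<Rightarrow> real \<Rightarrow> real) \<Rightarrow> (real \<Rightarrow> 'x) set set" where
  "gspace p \<sigma> = gclass p \<sigma> ` {h. moderate p \<sigma> h}"

definition rep :: "(real \<Rightarrow> 'x) set \<Rightarrow> real \<Rightarrow> 'x" where
  "rep C = (SOME h. h \<in> C)"

definition gscalars :: "('l \<Rightarrow> real \<Rightarrow> real) \<Rightarrow> (real \<Rightarrow> 'f::real_normed_field) set set" where
  "gscalars \<sigma> = gspace (\<lambda>_::unit. norm) \<sigma>"

definition gadd :: "('a \<Rightarrow> 'x::ab_group_add \<Rightarrow> real) \<Rightarrow> ('l \<Rightarrow> real \<Rightarrow> real) \<Rightarrow>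
    (real \<Rightarrow> 'x) set \<Rightarrow> (real \<Rightarrow> 'x) set \<Rightarrow> (real \<Rightarrow> 'x) set" where
  "gadd p \<sigma> C D = gclass p \<sigma> (\<lambda>e. rep C e + rep D e)"

definition gscale :: "('f \<Rightarrow> 'x \<Rightarrow> 'x) \<Rightarrow> ('a \<Rightarrow> 'x::ab_group_add \<Rightarrow> real) \<Rightarrow> ('l \<Rightarrow> real \<Rightarrow> real) \<Rightarrow>
    (real \<Rightarrow> 'f) set \<Rightarrow> (real \<Rightarrow> 'x) set \<Rightarrow> (real \<Rightarrow> 'x) set" where
  "gscale sc p \<sigma> c C = gclass p \<sigma> (\<lambda>e. sc (rep c e) (rep C e))"

text \<open>The sharp topology: generated by the translates C + U_{a,l} of the basic neighbourhoods of 0.\<close>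
definition sharp_nbhd :: "('a \<Rightarrow> 'x::ab_group_add \<Rightarrow> real) \<Rightarrow> ('l \<Rightarrow> real \<Rightarrow> real) \<Rightarrow>
    (real \<Rightarrow> 'x) set \<Rightarrow> 'a \<Rightarrow> 'l \<Rightarrow> (real \<Rightarrow> 'x) set set" where
  "sharp_nbhd p \<sigma> C a l = {D \<in> gspace p \<sigma>. \<exists>h\<in>C. \<exists>g\<in>D.
       (\<lambda>e. p a (g e - h e)) \<in> o[at_right 0](\<sigma> l)}"

definition sharp_top :: "('a \<Rightarrow> 'x::ab_group_add \<Rightarrow> real) \<Rightarrow> ('l \<Rightarrow> real \<Rightarrow> real) \<Rightarrow> (real \<Rightarrow> 'x) set topology" where
  "sharp_top p \<sigma> = topology_generated_by
     {sharp_nbhd p \<sigma> C a l | C a l. C \<in> gspace p \<sigma>}"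

text \<open>Operator seminorm ||T||_{b,A} (as a real; its finiteness is required separately).\<close>
definition op_seminorm :: "('a \<Rightarrow> 'x \<Rightarrow> real) \<Rightarrow> ('b \<Rightarrow> 'y \<Rightarrow> real) \<Rightarrow> ('x \<Rightarrow> 'y) \<Rightarrow> 'b \<Rightarrow> 'a set \<Rightarrow> real set" where
  "op_seminorm p q T b A = {q b (T h) | h. \<forall>a\<in>A. p a h \<le> 1}"

definition gmap :: "('b \<Rightarrow> 'y::ab_group_add \<Rightarrow> real) \<Rightarrow> ('l \<Rightarrow> real \<Rightarrow> real) \<Rightarrow>
    (real \<Rightarrow> 'x \<Rightarrow> 'y) \<Rightarrow> (real \<Rightarrow> 'x) set \<Rightarrow> (real \<Rightarrow> 'y) set" where
  "gmap q \<sigma> T C = gclass q \<sigma> (\<lambda>e. T e (rep C e))"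

end

theory Submission
  imports Defs
begin

text \<open>
  The growth condition says that for each seminorm \<open>b\<close> of the target,
  \<open>q b (T e x) \<le> M e * (\<Sum>a\<in>A. p a x)\<close> with finitely many seminorms \<open>a \<in> A\<close> of the source and a
  bound \<open>M\<close> that is moderate for the scale, \<open>\<sigma> l * M = o(1)\<close>. Since the scale is closed
  under products up to \<open>o\<close> (some \<open>\<sigma> k\<close> is \<open>o(\<sigma> l * \<sigma> j)\<close>), multiplying this bound by a
  moderate, resp. negligible, estimate of a net \<open>h\<close> gives a moderate, resp. negligible, estimate
  of \<open>T e (h e)\<close>. So \<open>T\<close> is well defined on classes, and linearity for each \<open>e\<close> passes to
  the classes. Read with \<open>\<sigma> k = o(\<sigma> l * \<sigma> j)\<close>, the same bound turns \<open>p a (h e) = o(\<sigma> k)\<close>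
  for \<open>a \<in> A\<close> into \<open>q b (T e (h e)) = o(\<sigma> j)\<close>: the preimage of a basic sharp neighbourhood
  contains a finite intersection of basic sharp neighbourhoods, which gives continuity.
\<close>

lemma smallo_if_nonneg_le:
  fixes f g :: "'a \<Rightarrow> real"
  assumes "\<forall>\<^sub>F x in F. 0 \<le> f x \<and> f x \<le> g x" and "g \<in> o[F](h)"
  shows "f \<in> o[F](h)"
proof (rule landau_o.big_small_trans[OF landau_o.big_mono assms(2)])
  show "\<forall>\<^sub>F x in F. norm (f x) \<le> norm (g x)"
    using assms(1) by eventually_elim auto
qed

lemma lcs_module: "lcs sc p \<Longrightarrow> module sc"
  by (simp add: lcs_def module_iff_vector_space)

lemma lcs_seminorm_nonneg: "lcs sc p \<Longrightarrow> 0 \<le> p a x"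
  by (simp add: lcs_def seminorm_on_def)

lemma lcs_seminorm_triangle: "lcs sc p \<Longrightarrow> p a (x + y) \<le> p a x + p a y"
  by (simp add: lcs_def seminorm_on_def)

lemma lcs_seminorm_scale: "lcs sc p \<Longrightarrow> p a (sc c x) = norm c * p a x"
  by (simp add: lcs_def seminorm_on_def)

lemma lcs_seminorm_zero: "lcs sc p \<Longrightarrow> p a 0 = 0"
  using lcs_seminorm_scale[of sc p a 0 0] module.scale_zero_left[OF lcs_module] by fastforce

lemma lcs_seminorm_minus: "lcs sc p \<Longrightarrow> p a (- x) = p a x"
  using lcs_seminorm_scale[of sc p a "-1" x] module.scale_minus_left[OF lcs_module, of sc p 1 x]
    module.scale_one[OF lcs_module, of sc p x] by simp

lemma lcs_seminorm_diff_commute: "lcs sc p \<Longrightarrow> p a (x - y) = p a (y - x)"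
  using lcs_seminorm_minus[of sc p a "y - x"] by simp

lemma lcs_seminorm_diff_triangle: "lcs sc p \<Longrightarrow> p a (x - z) \<le> p a (x - y) + p a (y - z)"
  using lcs_seminorm_triangle[of sc p a "x - y" "y - z"] by simp

lemma lcs_scalars: "lcs ((*) :: 'f::real_normed_field \<Rightarrow> 'f \<Rightarrow> 'f) (\<lambda>_::unit. norm)"
  unfolding lcs_def seminorm_on_def
  by (auto simp: Vector_Spaces.vector_space_def algebra_simps norm_mult norm_triangle_ineq)

lemma smallo_seminorm_diff_trans:
  assumes "lcs sc p"
    and "(\<lambda>e. p a (f e - g e)) \<in> o[F](s)" and "(\<lambda>e. p a (g e - h e)) \<in> o[F](s)"
  shows "(\<lambda>e. p a (f e - h e)) \<in> o[F](s)"
  by (rule smallo_if_nonneg_le[OF _ sum_in_smallo(1)[OF assms(2,3)]])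
    (simp add: lcs_seminorm_nonneg[OF assms(1)] lcs_seminorm_diff_triangle[OF assms(1)])

lemma smallo_seminorm_diff_commute:
  assumes "lcs sc p"
  shows "(\<lambda>e. p a (f e - g e)) \<in> o[F](s) \<longleftrightarrow> (\<lambda>e. p a (g e - f e)) \<in> o[F](s)"
proof -
  have "(\<lambda>e. p a (f e - g e)) = (\<lambda>e. p a (g e - f e))"
    by (intro ext lcs_seminorm_diff_commute[OF assms])
  then show ?thesis by simp
qed

section \<open>Asymptotic scales\<close>

lemma eventually_in_unit_interval: "\<forall>\<^sub>F e in at_right 0. e \<in> {0<..<(1::real)}"
  unfolding eventually_at_right_field by (intro exI[of _ 1]) auto

lemma asymptotic_scale_pos:
  assumes "asymptotic_scale prec \<sigma>"
  shows "\<forall>\<^sub>F e in at_right 0. 0 < \<sigma> l e"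
  using eventually_in_unit_interval
  by eventually_elim (use assms in \<open>auto simp: asymptotic_scale_def\<close>)

lemma asymptotic_scale_nonzero:
  assumes "asymptotic_scale prec \<sigma>"
  shows "\<forall>\<^sub>F e in at_right 0. \<sigma> l e \<noteq> 0"
  using asymptotic_scale_pos[OF assms, of l] by eventually_elim simp

lemma asymptotic_scale_bigo_1:
  assumes "asymptotic_scale prec \<sigma>"
  shows "\<sigma> l \<in> O[at_right 0](\<lambda>_. 1)"
proof -
  obtain d where d: "0 < d" "mono_on {0<..<d} (\<sigma> l)"
    using assms unfolding asymptotic_scale_def by blast
  have "\<forall>\<^sub>F e in at_right 0. e < d / 2"
    unfolding eventually_at_right_field using d(1) by (intro exI[of _ "d / 2"]) auto
  then have "\<forall>\<^sub>F e in at_right 0. norm (\<sigma> l e) \<le> \<sigma> l (d / 2) * norm (1::real)"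
    using asymptotic_scale_pos[OF assms, of l] eventually_at_right_less
    by eventually_elim (use d in \<open>auto intro!: mono_onD[OF d(2)]\<close>)
  then show ?thesis by (rule bigoI)
qed

lemma asymptotic_scale_smallo_mult:
  assumes "asymptotic_scale prec \<sigma>"
  obtains h where "\<sigma> h \<in> o[at_right 0](\<lambda>e. \<sigma> l e * \<sigma> j e)"
  using assms unfolding asymptotic_scale_def by blast

lemma asymptotic_scale_common_bigo:
  assumes "asymptotic_scale prec \<sigma>" and "finite B"
  shows "\<exists>m. \<forall>l\<in>B. \<sigma> m \<in> O[at_right 0](\<sigma> l)"
  using assms(2)
proof (induction B rule: finite_induct)
  case empty
  show ?case by simp
next
  case (insert j B)
  then obtain m where m: "\<forall>l\<in>B. \<sigma> m \<in> O[at_right 0](\<sigma> l)" by blast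
  obtain h where h: "\<sigma> h \<in> O[at_right 0](\<lambda>e. \<sigma> m e * \<sigma> j e)"
    using asymptotic_scale_smallo_mult[OF assms(1)] landau_o.small_imp_big by metis
  have "(\<lambda>e. \<sigma> m e * \<sigma> j e) \<in> O[at_right 0](\<sigma> m)"
    using landau_o.big.mult_left[OF asymptotic_scale_bigo_1[OF assms(1), of j]] by simp
  with h have hm: "\<sigma> h \<in> O[at_right 0](\<sigma> m)" by (rule landau_o.big_trans)
  have "(\<lambda>e. \<sigma> m e * \<sigma> j e) \<in> O[at_right 0](\<sigma> j)"
    using landau_o.big.mult_right[OF asymptotic_scale_bigo_1[OF assms(1), of m]] by simp
  with h have hj: "\<sigma> h \<in> O[at_right 0](\<sigma> j)" by (rule landau_o.big_trans)
  have "\<sigma> h \<in> O[at_right 0](\<sigma> l)" if "l \<in> insert j B" for l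
    using that hj landau_o.big_trans[OF hm] m by blast
  then show ?case by blast
qed

section \<open>Moderate and negligible nets\<close>

lemma negligible_zero: "lcs sc p \<Longrightarrow> negligible p \<sigma> (\<lambda>_. 0)"
  by (simp add: negligible_def lcs_seminorm_zero)

lemma negligible_uminus: "lcs sc p \<Longrightarrow> negligible p \<sigma> f \<Longrightarrow> negligible p \<sigma> (\<lambda>e. - f e)"
  by (simp add: negligible_def lcs_seminorm_minus)

lemma negligible_add:
  assumes "lcs sc p" and "negligible p \<sigma> f" "negligible p \<sigma> g"
  shows "negligible p \<sigma> (\<lambda>e. f e + g e)"
  unfolding negligible_def
proof (intro allI)
  fix a l
  have "(\<lambda>e. p a (f e)) \<in> o[at_right 0](\<sigma> l)" "(\<lambda>e. p a (g e)) \<in> o[at_right 0](\<sigma> l)"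
    using assms(2,3) unfolding negligible_def by blast+
  then have "(\<lambda>e. p a (f e) + p a (g e)) \<in> o[at_right 0](\<sigma> l)"
    by (rule sum_in_smallo(1))
  then show "(\<lambda>e. p a (f e + g e)) \<in> o[at_right 0](\<sigma> l)"
    by (rule smallo_if_nonneg_le[rotated])
      (simp add: lcs_seminorm_nonneg[OF assms(1)] lcs_seminorm_triangle[OF assms(1)])
qed

lemma negligible_cong:
  assumes "negligible p \<sigma> f" and "\<forall>\<^sub>F e in at_right 0. f e = g e"
  shows "negligible p \<sigma> g"
  unfolding negligible_def
proof (intro allI)
  fix a l
  have "\<forall>\<^sub>F e in at_right 0. p a (f e) = p a (g e)"
    using assms(2) by eventually_elim simp
  from landau_o.small.in_cong[OF this] show "(\<lambda>e. p a (g e)) \<in> o[at_right 0](\<sigma> l)"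
    using assms(1) unfolding negligible_def by blast
qed

lemma moderate_add:
  assumes "asymptotic_scale prec \<sigma>" and "lcs sc p"
    and "moderate p \<sigma> f" "moderate p \<sigma> g"
  shows "moderate p \<sigma> (\<lambda>e. f e + g e)"
  unfolding moderate_def
proof
  fix a
  obtain lf lg where lf: "(\<lambda>e. \<sigma> lf e * p a (f e)) \<in> o[at_right 0](\<lambda>_. 1)"
    and lg: "(\<lambda>e. \<sigma> lg e * p a (g e)) \<in> o[at_right 0](\<lambda>_. 1)"
    using assms(3,4) unfolding moderate_def by blast
  obtain m where m: "\<sigma> m \<in> O[at_right 0](\<sigma> lf)" "\<sigma> m \<in> O[at_right 0](\<sigma> lg)"
    using asymptotic_scale_common_bigo[OF assms(1), of "{lf, lg}"] by auto
  have "(\<lambda>e. \<sigma> m e * p a (f e) + \<sigma> m e * p a (g e)) \<in> o[at_right 0](\<lambda>_. 1)"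
    using landau_o.big_small_trans[OF landau_o.big.mult_right[OF m(1)] lf]
      landau_o.big_small_trans[OF landau_o.big.mult_right[OF m(2)] lg]
    by (rule sum_in_smallo)
  moreover have "\<forall>\<^sub>F e in at_right 0. 0 \<le> \<sigma> m e * p a (f e + g e) \<and>
      \<sigma> m e * p a (f e + g e) \<le> \<sigma> m e * p a (f e) + \<sigma> m e * p a (g e)"
    using asymptotic_scale_pos[OF assms(1), of m]
    by eventually_elim (auto simp: distrib_left[symmetric] lcs_seminorm_nonneg[OF assms(2)]
        intro: mult_left_mono lcs_seminorm_triangle[OF assms(2)])
  ultimately have "(\<lambda>e. \<sigma> m e * p a (f e + g e)) \<in> o[at_right 0](\<lambda>_. 1)"
    by (rule smallo_if_nonneg_le[rotated])
  then show "\<exists>l. (\<lambda>e. \<sigma> l e * p a (f e + g e)) \<in> o[at_right 0](\<lambda>_. 1)" ..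
qed

lemma moderate_scale:
  assumes "asymptotic_scale prec \<sigma>" and "lcs sc p"
    and c: "moderate (\<lambda>_::unit. norm) \<sigma> c" and h: "moderate p \<sigma> h"
  shows "moderate p \<sigma> (\<lambda>e. sc (c e) (h e))"
  unfolding moderate_def
proof
  fix a
  obtain lc where lc: "(\<lambda>e. \<sigma> lc e * norm (c e)) \<in> o[at_right 0](\<lambda>_. 1)"
    using c unfolding moderate_def by blast
  obtain lh where lh: "(\<lambda>e. \<sigma> lh e * p a (h e)) \<in> o[at_right 0](\<lambda>_. 1)"
    using h unfolding moderate_def by blast
  obtain m where m: "\<sigma> m \<in> O[at_right 0](\<lambda>e. \<sigma> lc e * \<sigma> lh e)"
    using asymptotic_scale_smallo_mult[OF assms(1)] landau_o.small_imp_big by metis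
  from landau_o.small_mult[OF lc lh]
  have "(\<lambda>e. (\<sigma> lc e * \<sigma> lh e) * (norm (c e) * p a (h e))) \<in> o[at_right 0](\<lambda>_. 1)"
    by (simp add: mult_ac)
  from landau_o.big_small_trans[OF landau_o.big.mult_right[OF m] this]
  show "\<exists>l. (\<lambda>e. \<sigma> l e * p a (sc (c e) (h e))) \<in> o[at_right 0](\<lambda>_. 1)"
    by (auto simp: lcs_seminorm_scale[OF assms(2)])
qed

lemma negligible_scale:
  assumes "asymptotic_scale prec \<sigma>" and "lcs sc p"
    and c: "moderate (\<lambda>_::unit. norm) \<sigma> c" and f: "negligible p \<sigma> f"
  shows "negligible p \<sigma> (\<lambda>e. sc (c e) (f e))"
  unfolding negligible_def
proof (intro allI)
  fix a j
  obtain lc where lc: "(\<lambda>e. \<sigma> lc e * norm (c e)) \<in> o[at_right 0](\<lambda>_. 1)"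
    using c unfolding moderate_def by blast
  obtain k where k: "\<sigma> k \<in> o[at_right 0](\<lambda>e. \<sigma> lc e * \<sigma> j e)"
    using asymptotic_scale_smallo_mult[OF assms(1)] by metis
  have "(\<lambda>e. p a (f e)) \<in> o[at_right 0](\<lambda>e. \<sigma> lc e * \<sigma> j e)"
    using f k unfolding negligible_def by (blast intro: landau_o.small_trans)
  from landau_o.small_mult[OF lc this]
  have "(\<lambda>e. \<sigma> lc e * (norm (c e) * p a (f e))) \<in> o[at_right 0](\<lambda>e. \<sigma> lc e * \<sigma> j e)"
    by (simp add: mult.assoc)
  then show "(\<lambda>e. p a (sc (c e) (f e))) \<in> o[at_right 0](\<sigma> j)"
    using landau_o.small.mult_cancel_left[OF bigtheta_refl asymptotic_scale_nonzero[OF assms(1)]]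
    by (simp add: lcs_seminorm_scale[OF assms(2)])
qed

section \<open>Generalised spaces and the sharp topology\<close>

lemma gclass_eq:
  assumes "lcs sc p" and "negligible p \<sigma> (\<lambda>e. f e - g e)"
  shows "gclass p \<sigma> f = gclass p \<sigma> g"
proof -
  have "negligible p \<sigma> (\<lambda>e. h e - f e) \<longleftrightarrow> negligible p \<sigma> (\<lambda>e. h e - g e)" for h
  proof
    assume "negligible p \<sigma> (\<lambda>e. h e - f e)"
    from negligible_add[OF assms(1) this assms(2)]
    show "negligible p \<sigma> (\<lambda>e. h e - g e)" by simp
  next
    assume "negligible p \<sigma> (\<lambda>e. h e - g e)"
    from negligible_add[OF assms(1) this negligible_uminus[OF assms]]
    show "negligible p \<sigma> (\<lambda>e. h e - f e)" by simp
  qed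
  then show ?thesis unfolding gclass_def by blast
qed

lemma gclass_cong:
  assumes "lcs sc p" and "\<forall>\<^sub>F e in at_right 0. f e = g e"
  shows "gclass p \<sigma> f = gclass p \<sigma> g"
proof (rule gclass_eq[OF assms(1) negligible_cong[OF negligible_zero[OF assms(1)]]])
  show "\<forall>\<^sub>F e in at_right 0. 0 = f e - g e"
    using assms(2) by eventually_elim simp
qed

lemma rep_mem: "x \<in> C \<Longrightarrow> rep C \<in> C"
  unfolding rep_def by (rule someI[of "\<lambda>x. x \<in> C"])

lemma self_mem_gclass: "lcs sc p \<Longrightarrow> moderate p \<sigma> h \<Longrightarrow> h \<in> gclass p \<sigma> h"
  by (simp add: gclass_def negligible_def lcs_seminorm_zero)

text \<open>\<^const>\<open>rep\<close> chooses by \<open>SOME\<close>, which says nothing about an empty class; hence the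
  moderateness assumptions here and below.\<close>

lemma rep_gclass:
  assumes "lcs sc p" and "moderate p \<sigma> h"
  shows "negligible p \<sigma> (\<lambda>e. rep (gclass p \<sigma> h) e - h e)"
proof -
  have "rep (gclass p \<sigma> h) \<in> gclass p \<sigma> h"
    using self_mem_gclass[OF assms] by (rule rep_mem)
  then show ?thesis by (simp add: gclass_def)
qed

lemma gspace_rep:
  assumes "lcs sc p" and "C \<in> gspace p \<sigma>"
  shows "rep C \<in> C" and "moderate p \<sigma> (rep C)" and "C = gclass p \<sigma> (rep C)"
proof -
  obtain h where h: "moderate p \<sigma> h" and C: "C = gclass p \<sigma> h"
    using assms(2) unfolding gspace_def by blast
  show "rep C \<in> C"
    unfolding C using self_mem_gclass[OF assms(1) h] by (rule rep_mem)
  then show "moderate p \<sigma> (rep C)" "C = gclass p \<sigma> (rep C)"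
    unfolding C using gclass_eq[OF assms(1)] by (auto simp: gclass_def)
qed

lemma gadd_gclass:
  assumes "lcs sc p" and "moderate p \<sigma> f" "moderate p \<sigma> g"
  shows "gadd p \<sigma> (gclass p \<sigma> f) (gclass p \<sigma> g) = gclass p \<sigma> (\<lambda>e. f e + g e)"
  unfolding gadd_def
proof (rule gclass_eq[OF assms(1)])
  show "negligible p \<sigma> (\<lambda>e. rep (gclass p \<sigma> f) e + rep (gclass p \<sigma> g) e - (f e + g e))"
    using negligible_add[OF assms(1) rep_gclass[OF assms(1,2)] rep_gclass[OF assms(1,3)]]
    by (simp add: algebra_simps)
qed

lemma gscale_gclass:
  assumes "asymptotic_scale prec \<sigma>" and "lcs sc p" and "c \<in> gscalars \<sigma>" "moderate p \<sigma> h"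
  shows "gscale sc p \<sigma> c (gclass p \<sigma> h) = gclass p \<sigma> (\<lambda>e. sc (rep c e) (h e))"
  unfolding gscale_def
proof (rule gclass_eq[OF assms(2)])
  have "moderate (\<lambda>_::unit. norm) \<sigma> (rep c)"
    using gspace_rep(2)[OF lcs_scalars] assms(3) unfolding gscalars_def by blast
  from negligible_scale[OF assms(1,2) this rep_gclass[OF assms(2,4)]]
  show "negligible p \<sigma> (\<lambda>e. sc (rep c e) (rep (gclass p \<sigma> h) e) - sc (rep c e) (h e))"
    by (simp add: module.scale_right_diff_distrib[OF lcs_module[OF assms(2)]])
qed

lemma mem_sharp_nbhd_iff:
  assumes "lcs sc p" and "C \<in> gspace p \<sigma>"
  shows "D \<in> sharp_nbhd p \<sigma> C a l \<longleftrightarrow>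
    D \<in> gspace p \<sigma> \<and> (\<lambda>e. p a (rep D e - rep C e)) \<in> o[at_right 0](\<sigma> l)"
proof
  assume "D \<in> sharp_nbhd p \<sigma> C a l"
  then obtain h g where D: "D \<in> gspace p \<sigma>" and "h \<in> C" "g \<in> D"
    and gh: "(\<lambda>e. p a (g e - h e)) \<in> o[at_right 0](\<sigma> l)"
    unfolding sharp_nbhd_def by blast
  have "(\<lambda>e. p a (g e - rep D e)) \<in> o[at_right 0](\<sigma> l)"
    using \<open>g \<in> D\<close> gspace_rep(3)[OF assms(1) D] by (auto simp: gclass_def negligible_def)
  then have Dg: "(\<lambda>e. p a (rep D e - g e)) \<in> o[at_right 0](\<sigma> l)"
    by (simp only: smallo_seminorm_diff_commute[OF assms(1)])
  have hC: "(\<lambda>e. p a (h e - rep C e)) \<in> o[at_right 0](\<sigma> l)"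
    using \<open>h \<in> C\<close> gspace_rep(3)[OF assms] by (auto simp: gclass_def negligible_def)
  have "(\<lambda>e. p a (rep D e - rep C e)) \<in> o[at_right 0](\<sigma> l)"
    using smallo_seminorm_diff_trans[OF assms(1) Dg smallo_seminorm_diff_trans[OF assms(1) gh hC]] .
  with D show "D \<in> gspace p \<sigma> \<and> (\<lambda>e. p a (rep D e - rep C e)) \<in> o[at_right 0](\<sigma> l)" ..
next
  assume "D \<in> gspace p \<sigma> \<and> (\<lambda>e. p a (rep D e - rep C e)) \<in> o[at_right 0](\<sigma> l)"
  then show "D \<in> sharp_nbhd p \<sigma> C a l"
    using gspace_rep(1)[OF assms(1)] assms(2) unfolding sharp_nbhd_def by blast
qed

lemma self_mem_sharp_nbhd: "lcs sc p \<Longrightarrow> C \<in> gspace p \<sigma> \<Longrightarrow> C \<in> sharp_nbhd p \<sigma> C a l"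
  by (simp add: mem_sharp_nbhd_iff lcs_seminorm_zero)

lemma sharp_nbhd_trans:
  assumes "lcs sc p" and "E \<in> gspace p \<sigma>"
    and "C \<in> sharp_nbhd p \<sigma> E a l" and "D \<in> sharp_nbhd p \<sigma> C a l"
  shows "D \<in> sharp_nbhd p \<sigma> E a l"
proof -
  have C: "C \<in> gspace p \<sigma>" "(\<lambda>e. p a (rep C e - rep E e)) \<in> o[at_right 0](\<sigma> l)"
    using assms(3) mem_sharp_nbhd_iff[OF assms(1,2)] by blast+
  have D: "D \<in> gspace p \<sigma>" "(\<lambda>e. p a (rep D e - rep C e)) \<in> o[at_right 0](\<sigma> l)"
    using assms(4) mem_sharp_nbhd_iff[OF assms(1) C(1)] by blast+
  show ?thesis
    unfolding mem_sharp_nbhd_iff[OF assms(1,2)]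
    using D(1) smallo_seminorm_diff_trans[OF assms(1) D(2) C(2)] ..
qed

lemma topspace_sharp_top:
  assumes "lcs sc p"
  shows "topspace (sharp_top p \<sigma>) = gspace p \<sigma>"
  unfolding sharp_top_def topology_generated_by_topspace
proof (intro equalityI subsetI)
  fix C assume "C \<in> gspace p \<sigma>"
  then have "C \<in> sharp_nbhd p \<sigma> C undefined undefined"
    by (rule self_mem_sharp_nbhd[OF assms])
  then show "C \<in> \<Union> {sharp_nbhd p \<sigma> C a l |C a l. C \<in> gspace p \<sigma>}"
    using \<open>C \<in> gspace p \<sigma>\<close> by blast
qed (auto simp: sharp_nbhd_def)

lemma openin_sharp_nbhd:
  "C \<in> gspace p \<sigma> \<Longrightarrow> openin (sharp_top p \<sigma>) (sharp_nbhd p \<sigma> C a l)"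
  unfolding sharp_top_def by (rule topology_generated_by_Basis) blast

section \<open>Moderate operator nets\<close>

lemma op_seminorm_bound:
  assumes X: "lcs sX p" and Y: "lcs sY q" and T: "Vector_Spaces.linear sX sY T"
    and A: "finite A" and bdd: "bdd_above (op_seminorm p q T b A)"
  shows "q b (T x) \<le> Sup (op_seminorm p q T b A) * (\<Sum>a\<in>A. p a x)"
proof -
  define S where "S = Sup (op_seminorm p q T b A)"
  define s where "s = (\<Sum>a\<in>A. p a x)"
  \<comment> \<open>Test the supremum on \<open>x\<close> scaled by \<open>1 / t\<close> for every \<open>t > s\<close>, then let \<open>t\<close> decrease
    to \<open>s\<close>; this also covers \<open>s = 0\<close>.\<close>
  have scaled: "q b (T x) \<le> S * t" if "s < t" for t
  proof -
    have "0 \<le> s" unfolding s_def by (simp add: sum_nonneg lcs_seminorm_nonneg[OF X])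
    with that have "0 < t" by simp
    have "p a x \<le> t" if "a \<in> A" for a
    proof -
      have "p a x \<le> s"
        unfolding s_def using A that
        by (intro member_le_sum) (simp_all add: lcs_seminorm_nonneg[OF X])
      with \<open>s < t\<close> show ?thesis by simp
    qed
    with \<open>0 < t\<close> have "\<forall>a\<in>A. p a (sX (of_real (1 / t)) x) \<le> 1"
      by (simp add: lcs_seminorm_scale[OF X] norm_divide)
    then have le: "q b (T (sX (of_real (1 / t)) x)) \<le> S"
      unfolding S_def op_seminorm_def
      by (intro cSup_upper[OF _ bdd[unfolded op_seminorm_def]]) blast
    have "q b (T x) = t * q b (T (sX (of_real (1 / t)) x))"
      using \<open>0 < t\<close> T
      by (simp add: linear_iff_module_hom module_hom.scale lcs_seminorm_scale[OF Y] norm_divide)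
    also have "\<dots> \<le> t * S"
      using \<open>0 < t\<close> le by (intro mult_left_mono) simp_all
    finally show ?thesis by (simp add: mult.commute)
  qed
  have "((\<lambda>t. S * t) \<longlongrightarrow> S * s) (at_right s)"
    by (intro tendsto_intros)
  moreover have "\<forall>\<^sub>F t in at_right s. q b (T x) \<le> S * t"
    using eventually_at_right_less[of s] by (rule eventually_mono) (rule scaled)
  moreover have "at_right s \<noteq> bot"
    using trivial_limit_at_right_real unfolding trivial_limit_def .
  ultimately show ?thesis
    unfolding S_def s_def by (rule tendsto_lowerbound)
qed

text \<open>The growth condition of the theorem with the operator seminorm \<open>\<parallel>T e\<parallel>\<^sub>b\<^sub>,\<^sub>A\<close> replaced
  by an arbitrary bound \<open>M e\<close>; the consequences drawn from it below do not need linearity.\<close>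

definition moderate_operator_net ::
    "('a \<Rightarrow> 'x \<Rightarrow> real) \<Rightarrow> ('b \<Rightarrow> 'y \<Rightarrow> real) \<Rightarrow> ('l \<Rightarrow> real \<Rightarrow> real) \<Rightarrow>
     (real \<Rightarrow> 'x \<Rightarrow> 'y) \<Rightarrow> bool" where
  "moderate_operator_net p q \<sigma> T \<longleftrightarrow> (\<forall>b. \<exists>l A M. finite A \<and>
     (\<lambda>e. \<sigma> l e * M e) \<in> o[at_right 0](\<lambda>_. 1) \<and>
     (\<forall>\<^sub>F e in at_right 0. \<forall>x. q b (T e x) \<le> M e * (\<Sum>a\<in>A. p a x)))"

lemma moderate_operator_netI:
  assumes X: "lcs sX p" and Y: "lcs sY q"
    and lin: "\<And>e. e \<in> {0<..<1} \<Longrightarrow> Vector_Spaces.linear sX sY (T e)"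
    and growth: "\<forall>b. \<exists>l A. finite A \<and>
        (\<forall>\<^sub>F e in at_right 0. bdd_above (op_seminorm p q (T e) b A)) \<and>
        (\<lambda>e. \<sigma> l e * Sup (op_seminorm p q (T e) b A)) \<in> o[at_right 0](\<lambda>_. 1)"
  shows "moderate_operator_net p q \<sigma> T"
  unfolding moderate_operator_net_def
proof
  fix b
  obtain l A where A: "finite A"
    and bdd: "\<forall>\<^sub>F e in at_right 0. bdd_above (op_seminorm p q (T e) b A)"
    and small: "(\<lambda>e. \<sigma> l e * Sup (op_seminorm p q (T e) b A)) \<in> o[at_right 0](\<lambda>_. 1)"
    using growth by blast
  have "\<forall>\<^sub>F e in at_right 0. \<forall>x. q b (T e x) \<le> Sup (op_seminorm p q (T e) b A) * (\<Sum>a\<in>A. p a x)"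
    using bdd eventually_in_unit_interval
  proof eventually_elim
    case (elim e)
    show ?case using op_seminorm_bound[OF X Y lin[OF elim(2)] A elim(1)] ..
  qed
  with A small show "\<exists>l A M. finite A \<and> (\<lambda>e. \<sigma> l e * M e) \<in> o[at_right 0](\<lambda>_. 1) \<and>
      (\<forall>\<^sub>F e in at_right 0. \<forall>x. q b (T e x) \<le> M e * (\<Sum>a\<in>A. p a x))"
    by (intro exI[of _ l] exI[of _ A] exI[of _ "\<lambda>e. Sup (op_seminorm p q (T e) b A)"]) simp
qed

lemma moderate_operator_net_smallo:
  assumes "asymptotic_scale prec \<sigma>" and "lcs sY q" and "moderate_operator_net p q \<sigma> T"
  shows "\<exists>k A. finite A \<and> (\<forall>f. (\<forall>a\<in>A. (\<lambda>e. p a (f e)) \<in> o[at_right 0](\<sigma> k)) \<longrightarrow>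
      (\<lambda>e. q b (T e (f e))) \<in> o[at_right 0](\<sigma> j))"
proof -
  obtain l A M where A: "finite A" and M: "(\<lambda>e. \<sigma> l e * M e) \<in> o[at_right 0](\<lambda>_. 1)"
    and bound: "\<forall>\<^sub>F e in at_right 0. \<forall>x. q b (T e x) \<le> M e * (\<Sum>a\<in>A. p a x)"
    using assms(3) unfolding moderate_operator_net_def by blast
  obtain k where k: "\<sigma> k \<in> o[at_right 0](\<lambda>e. \<sigma> l e * \<sigma> j e)"
    using asymptotic_scale_smallo_mult[OF assms(1)] by metis
  have "(\<lambda>e. q b (T e (f e))) \<in> o[at_right 0](\<sigma> j)"
    if f: "\<forall>a\<in>A. (\<lambda>e. p a (f e)) \<in> o[at_right 0](\<sigma> k)" for f
  proof -
    have "(\<lambda>e. \<Sum>a\<in>A. p a (f e)) \<in> o[at_right 0](\<lambda>e. \<sigma> l e * \<sigma> j e)"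
      using f landau_o.small_trans[OF _ k] by (intro big_sum_in_smallo) blast
    from landau_o.small_mult[OF M this]
    have "(\<lambda>e. \<sigma> l e * (M e * (\<Sum>a\<in>A. p a (f e)))) \<in> o[at_right 0](\<lambda>e. \<sigma> l e * \<sigma> j e)"
      by (simp add: mult.assoc)
    then have "(\<lambda>e. M e * (\<Sum>a\<in>A. p a (f e))) \<in> o[at_right 0](\<sigma> j)"
      using landau_o.small.mult_cancel_left[OF bigtheta_refl asymptotic_scale_nonzero[OF assms(1)]]
      by simp
    moreover have "\<forall>\<^sub>F e in at_right 0.
        0 \<le> q b (T e (f e)) \<and> q b (T e (f e)) \<le> M e * (\<Sum>a\<in>A. p a (f e))"
      using bound by eventually_elim (simp add: lcs_seminorm_nonneg[OF assms(2)])
    ultimately show ?thesis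
      by (rule smallo_if_nonneg_le[rotated])
  qed
  with A show ?thesis by blast
qed

lemma moderate_operator_net_negligible:
  assumes "asymptotic_scale prec \<sigma>" and "lcs sY q" and "moderate_operator_net p q \<sigma> T"
    and "negligible p \<sigma> f"
  shows "negligible q \<sigma> (\<lambda>e. T e (f e))"
  unfolding negligible_def
proof (intro allI)
  fix b j
  obtain k A where "\<forall>f. (\<forall>a\<in>A. (\<lambda>e. p a (f e)) \<in> o[at_right 0](\<sigma> k)) \<longrightarrow>
      (\<lambda>e. q b (T e (f e))) \<in> o[at_right 0](\<sigma> j)"
    using moderate_operator_net_smallo[OF assms(1-3)] by blast
  with assms(4) show "(\<lambda>e. q b (T e (f e))) \<in> o[at_right 0](\<sigma> j)"
    unfolding negligible_def by blast
qed

lemma moderate_operator_net_moderate: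
  assumes "asymptotic_scale prec \<sigma>" and "lcs sY q" and "moderate_operator_net p q \<sigma> T"
    and h: "moderate p \<sigma> h"
  shows "moderate q \<sigma> (\<lambda>e. T e (h e))"
  unfolding moderate_def
proof
  fix b
  obtain l A M where A: "finite A" and M: "(\<lambda>e. \<sigma> l e * M e) \<in> o[at_right 0](\<lambda>_. 1)"
    and bound: "\<forall>\<^sub>F e in at_right 0. \<forall>x. q b (T e x) \<le> M e * (\<Sum>a\<in>A. p a x)"
    using assms(3) unfolding moderate_operator_net_def by blast
  obtain L where L: "\<And>a. (\<lambda>e. \<sigma> (L a) e * p a (h e)) \<in> o[at_right 0](\<lambda>_. 1)"
    using choice[OF h[unfolded moderate_def]] by blast
  obtain m0 where m0: "\<And>a. a \<in> A \<Longrightarrow> \<sigma> m0 \<in> O[at_right 0](\<sigma> (L a))"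
    using asymptotic_scale_common_bigo[OF assms(1), of "L ` A"] A by blast
  have "(\<lambda>e. \<Sum>a\<in>A. \<sigma> m0 e * p a (h e)) \<in> o[at_right 0](\<lambda>_. 1)"
    using landau_o.big_small_trans[OF landau_o.big.mult_right[OF m0] L] by (rule big_sum_in_smallo)
  then have "(\<lambda>e. \<sigma> m0 e * (\<Sum>a\<in>A. p a (h e))) \<in> o[at_right 0](\<lambda>_. 1)"
    by (simp add: sum_distrib_left)
  from landau_o.small_mult[OF M this]
  have small: "(\<lambda>e. (\<sigma> l e * \<sigma> m0 e) * (M e * (\<Sum>a\<in>A. p a (h e)))) \<in> o[at_right 0](\<lambda>_. 1)"
    by (simp add: mult_ac)
  obtain m where m: "\<sigma> m \<in> O[at_right 0](\<lambda>e. \<sigma> l e * \<sigma> m0 e)"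
    using asymptotic_scale_smallo_mult[OF assms(1)] landau_o.small_imp_big by metis
  have "(\<lambda>e. \<sigma> m e * (M e * (\<Sum>a\<in>A. p a (h e)))) \<in> o[at_right 0](\<lambda>_. 1)"
    using landau_o.big_small_trans[OF landau_o.big.mult_right[OF m] small] .
  moreover have "\<forall>\<^sub>F e in at_right 0. 0 \<le> \<sigma> m e * q b (T e (h e)) \<and>
      \<sigma> m e * q b (T e (h e)) \<le> \<sigma> m e * (M e * (\<Sum>a\<in>A. p a (h e)))"
    using bound asymptotic_scale_pos[OF assms(1), of m]
    by eventually_elim (simp add: lcs_seminorm_nonneg[OF assms(2)])
  ultimately have "(\<lambda>e. \<sigma> m e * q b (T e (h e))) \<in> o[at_right 0](\<lambda>_. 1)"
    by (rule smallo_if_nonneg_le[rotated])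
  then show "\<exists>m. (\<lambda>e. \<sigma> m e * q b (T e (h e))) \<in> o[at_right 0](\<lambda>_. 1)" ..
qed

section \<open>The induced map\<close>

context
  fixes sX :: "'f::real_normed_field \<Rightarrow> 'x::ab_group_add \<Rightarrow> 'x"
    and sY :: "'f \<Rightarrow> 'y::ab_group_add \<Rightarrow> 'y"
    and p :: "'a \<Rightarrow> 'x \<Rightarrow> real" and q :: "'b \<Rightarrow> 'y \<Rightarrow> real"
    and prec :: "'l \<Rightarrow> 'l \<Rightarrow> bool" and \<sigma> :: "'l \<Rightarrow> real \<Rightarrow> real"
    and T :: "real \<Rightarrow> 'x \<Rightarrow> 'y"
  assumes scale: "asymptotic_scale prec \<sigma>"
    and X: "lcs sX p" and Y: "lcs sY q"
    and lin: "\<And>e. e \<in> {0<..<1} \<Longrightarrow> Vector_Spaces.linear sX sY (T e)"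
    and net: "moderate_operator_net p q \<sigma> T"
begin

lemma eventually_module_hom: "\<forall>\<^sub>F e in at_right 0. module_hom sX sY (T e)"
  using eventually_in_unit_interval by eventually_elim (simp add: lin flip: linear_iff_module_hom)

lemma gmap_gclass:
  assumes "moderate p \<sigma> h"
  shows "gmap q \<sigma> T (gclass p \<sigma> h) = gclass q \<sigma> (\<lambda>e. T e (h e))"
  unfolding gmap_def
proof (rule gclass_eq[OF Y])
  have "negligible q \<sigma> (\<lambda>e. T e (rep (gclass p \<sigma> h) e - h e))"
    by (rule moderate_operator_net_negligible[OF scale Y net rep_gclass[OF X assms]])
  then show "negligible q \<sigma> (\<lambda>e. T e (rep (gclass p \<sigma> h) e) - T e (h e))"
    by (rule negligible_cong)
      (use eventually_module_hom in \<open>auto elim: eventually_mono simp: module_hom.diff\<close>)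
qed

lemma gmap_in_gspace:
  assumes "C \<in> gspace p \<sigma>"
  shows "gmap q \<sigma> T C \<in> gspace q \<sigma>"
  unfolding gmap_def gspace_def
  using moderate_operator_net_moderate[OF scale Y net gspace_rep(2)[OF X assms]] by blast

lemma gmap_gadd_gscale:
  assumes c: "c \<in> gscalars \<sigma>" and C: "C \<in> gspace p \<sigma>" and D: "D \<in> gspace p \<sigma>"
  shows "gmap q \<sigma> T (gadd p \<sigma> (gscale sX p \<sigma> c C) D) =
    gadd q \<sigma> (gscale sY q \<sigma> c (gmap q \<sigma> T C)) (gmap q \<sigma> T D)"
proof -
  have mc: "moderate (\<lambda>_::unit. norm) \<sigma> (rep c)"
    using gspace_rep(2)[OF lcs_scalars] c unfolding gscalars_def by blast
  have mC: "moderate p \<sigma> (rep C)" and mD: "moderate p \<sigma> (rep D)"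
    using gspace_rep(2)[OF X] C D by blast+
  have eC: "gclass p \<sigma> (rep C) = C" and eD: "gclass p \<sigma> (rep D) = D"
    using gspace_rep(3)[OF X] C D by auto
  have TC: "moderate q \<sigma> (\<lambda>e. T e (rep C e))" and TD: "moderate q \<sigma> (\<lambda>e. T e (rep D e))"
    using moderate_operator_net_moderate[OF scale Y net] mC mD by blast+
  have mcC: "moderate p \<sigma> (\<lambda>e. sX (rep c e) (rep C e))"
    by (rule moderate_scale[OF scale X mc mC])
  have mcTC: "moderate q \<sigma> (\<lambda>e. sY (rep c e) (T e (rep C e)))"
    by (rule moderate_scale[OF scale Y mc TC])
  have "gadd p \<sigma> (gscale sX p \<sigma> c C) D = gclass p \<sigma> (\<lambda>e. sX (rep c e) (rep C e) + rep D e)"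
    using gscale_gclass[OF scale X c mC] gadd_gclass[OF X mcC mD] unfolding eC eD by simp
  then have "gmap q \<sigma> T (gadd p \<sigma> (gscale sX p \<sigma> c C) D) =
      gclass q \<sigma> (\<lambda>e. T e (sX (rep c e) (rep C e) + rep D e))"
    using gmap_gclass[OF moderate_add[OF scale X mcC mD]] by simp
  also have "\<dots> = gclass q \<sigma> (\<lambda>e. sY (rep c e) (T e (rep C e)) + T e (rep D e))"
    using eventually_module_hom
    by (intro gclass_cong[OF Y]) (auto elim: eventually_mono simp: module_hom.add module_hom.scale)
  also have "\<dots> = gadd q \<sigma> (gscale sY q \<sigma> c (gmap q \<sigma> T C)) (gmap q \<sigma> T D)"
    using gmap_gclass[OF mC] gmap_gclass[OF mD] gscale_gclass[OF scale Y c TC]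
      gadd_gclass[OF Y mcTC TD]
    unfolding eC eD by simp
  finally show ?thesis .
qed

lemma gmap_sharp_nbhd:
  assumes C: "C \<in> gspace p \<sigma>"
  shows "\<exists>k A. finite A \<and> (\<forall>D\<in>gspace p \<sigma>. (\<forall>a\<in>A. D \<in> sharp_nbhd p \<sigma> C a k) \<longrightarrow>
    gmap q \<sigma> T D \<in> sharp_nbhd q \<sigma> (gmap q \<sigma> T C) b j)"
proof -
  obtain k A where A: "finite A"
    and close: "\<forall>f. (\<forall>a\<in>A. (\<lambda>e. p a (f e)) \<in> o[at_right 0](\<sigma> k)) \<longrightarrow>
      (\<lambda>e. q b (T e (f e))) \<in> o[at_right 0](\<sigma> j)"
    using moderate_operator_net_smallo[OF scale Y net] by blast
  have "gmap q \<sigma> T D \<in> sharp_nbhd q \<sigma> (gmap q \<sigma> T C) b j"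
    if D: "D \<in> gspace p \<sigma>" and near: "\<forall>a\<in>A. D \<in> sharp_nbhd p \<sigma> C a k" for D
  proof -
    have "(\<lambda>e. p a (rep D e - rep C e)) \<in> o[at_right 0](\<sigma> k)" if "a \<in> A" for a
      using near that mem_sharp_nbhd_iff[OF X C] by blast
    from close[rule_format, OF this]
    have small: "(\<lambda>e. q b (T e (rep D e - rep C e))) \<in> o[at_right 0](\<sigma> j)" .
    have "\<forall>\<^sub>F e in at_right 0.
        q b (T e (rep D e - rep C e)) = q b (T e (rep D e) - T e (rep C e))"
      using eventually_module_hom by eventually_elim (simp add: module_hom.diff)
    from landau_o.small.in_cong[OF this] small
    have TDC: "(\<lambda>e. q b (T e (rep D e) - T e (rep C e))) \<in> o[at_right 0](\<sigma> j)" by blast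
    have "negligible q \<sigma> (\<lambda>e. rep (gmap q \<sigma> T D) e - T e (rep D e))"
      unfolding gmap_def using gspace_rep(2)[OF X D]
      by (intro rep_gclass[OF Y] moderate_operator_net_moderate[OF scale Y net])
    then have "(\<lambda>e. q b (rep (gmap q \<sigma> T D) e - T e (rep D e))) \<in> o[at_right 0](\<sigma> j)"
      unfolding negligible_def by blast
    moreover have "negligible q \<sigma> (\<lambda>e. rep (gmap q \<sigma> T C) e - T e (rep C e))"
      unfolding gmap_def using gspace_rep(2)[OF X C]
      by (intro rep_gclass[OF Y] moderate_operator_net_moderate[OF scale Y net])
    then have "(\<lambda>e. q b (T e (rep C e) - rep (gmap q \<sigma> T C) e)) \<in> o[at_right 0](\<sigma> j)"
      unfolding negligible_def by (subst smallo_seminorm_diff_commute[OF Y]) blast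
    ultimately have
      "(\<lambda>e. q b (rep (gmap q \<sigma> T D) e - rep (gmap q \<sigma> T C) e)) \<in> o[at_right 0](\<sigma> j)"
      using smallo_seminorm_diff_trans[OF Y _ smallo_seminorm_diff_trans[OF Y TDC]] by blast
    then show ?thesis
      using mem_sharp_nbhd_iff[OF Y gmap_in_gspace[OF C]] gmap_in_gspace[OF D] by blast
  qed
  with A show ?thesis by blast
qed

lemma continuous_map_gmap: "continuous_map (sharp_top p \<sigma>) (sharp_top q \<sigma>) (gmap q \<sigma> T)"
  unfolding sharp_top_def[of q]
proof (rule continuous_on_generated_topo)
  have "\<Union> {sharp_nbhd q \<sigma> E b j |E b j. E \<in> gspace q \<sigma>} = gspace q \<sigma>"
    using topspace_sharp_top[OF Y, of \<sigma>] unfolding sharp_top_def topology_generated_by_topspace .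
  then show "gmap q \<sigma> T ` topspace (sharp_top p \<sigma>) \<subseteq>
      \<Union> {sharp_nbhd q \<sigma> E b j |E b j. E \<in> gspace q \<sigma>}"
    using gmap_in_gspace by (auto simp: topspace_sharp_top[OF X])
next
  fix U assume "U \<in> {sharp_nbhd q \<sigma> E b j |E b j. E \<in> gspace q \<sigma>}"
  then obtain E b j where E: "E \<in> gspace q \<sigma>" and U: "U = sharp_nbhd q \<sigma> E b j" by blast
  show "openin (sharp_top p \<sigma>) (gmap q \<sigma> T -` U \<inter> topspace (sharp_top p \<sigma>))"
  proof (subst openin_subopen, intro ballI)
    fix C assume "C \<in> gmap q \<sigma> T -` U \<inter> topspace (sharp_top p \<sigma>)"
    then have C: "C \<in> gspace p \<sigma>" and CU: "gmap q \<sigma> T C \<in> U"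
      by (auto simp: topspace_sharp_top[OF X])
    obtain k A where A: "finite A"
      and near: "\<forall>D\<in>gspace p \<sigma>. (\<forall>a\<in>A. D \<in> sharp_nbhd p \<sigma> C a k) \<longrightarrow>
        gmap q \<sigma> T D \<in> sharp_nbhd q \<sigma> (gmap q \<sigma> T C) b j"
      using gmap_sharp_nbhd[OF C] by blast
    define V where "V = (\<Inter>a\<in>A. sharp_nbhd p \<sigma> C a k) \<inter> topspace (sharp_top p \<sigma>)"
    have "openin (sharp_top p \<sigma>) V"
      unfolding V_def by (intro openin_INT A openin_sharp_nbhd[OF C])
    moreover have "C \<in> V"
      unfolding V_def using C self_mem_sharp_nbhd[OF X C] by (simp add: topspace_sharp_top[OF X])
    moreover have "V \<subseteq> gmap q \<sigma> T -` U \<inter> topspace (sharp_top p \<sigma>)"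
      unfolding V_def U using near sharp_nbhd_trans[OF Y E CU[unfolded U]]
      by (auto simp: topspace_sharp_top[OF X])
    ultimately show "\<exists>V. openin (sharp_top p \<sigma>) V \<and> C \<in> V \<and>
        V \<subseteq> gmap q \<sigma> T -` U \<inter> topspace (sharp_top p \<sigma>)"
      by blast
  qed
qed

end

theorem mainTheorem9:
  fixes sX :: "'f::real_normed_field \<Rightarrow> 'x::ab_group_add \<Rightarrow> 'x"
    and sY :: "'f \<Rightarrow> 'y::ab_group_add \<Rightarrow> 'y"
    and p :: "'a \<Rightarrow> 'x \<Rightarrow> real" and q :: "'b \<Rightarrow> 'y \<Rightarrow> real"
    and prec :: "'l \<Rightarrow> 'l \<Rightarrow> bool" and \<sigma> :: "'l \<Rightarrow> real \<Rightarrow> real"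
    and T :: "real \<Rightarrow> 'x \<Rightarrow> 'y"
  assumes scale: "asymptotic_scale prec \<sigma>"
    and X: "lcs sX p" and Y: "lcs sY q"
    and lin: "\<And>e. e \<in> {0<..<1} \<Longrightarrow> Vector_Spaces.linear sX sY (T e)"
    and cont: "\<And>e. e \<in> {0<..<1} \<Longrightarrow> continuous_map (lc_top p) (lc_top q) (T e)"
    and growth: "\<forall>b. \<exists>l A. finite A \<and>
        (\<forall>\<^sub>F e in at_right 0. bdd_above (op_seminorm p q (T e) b A)) \<and>
        (\<lambda>e. \<sigma> l e * Sup (op_seminorm p q (T e) b A)) \<in> o[at_right 0](\<lambda>_. 1)"
  shows "(\<forall>h. moderate p \<sigma> h \<longrightarrow>
            moderate q \<sigma> (\<lambda>e. T e (h e)) \<and>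
            gmap q \<sigma> T (gclass p \<sigma> h) = gclass q \<sigma> (\<lambda>e. T e (h e)))
     \<and> gmap q \<sigma> T ` gspace p \<sigma> \<subseteq> gspace q \<sigma>
     \<and> (\<forall>c\<in>gscalars \<sigma>. \<forall>C\<in>gspace p \<sigma>. \<forall>D\<in>gspace p \<sigma>.
          gmap q \<sigma> T (gadd p \<sigma> (gscale sX p \<sigma> c C) D) =
          gadd q \<sigma> (gscale sY q \<sigma> c (gmap q \<sigma> T C)) (gmap q \<sigma> T D))
     \<and> continuous_map (sharp_top p \<sigma>) (sharp_top q \<sigma>) (gmap q \<sigma> T)"
proof -
  have net: "moderate_operator_net p q \<sigma> T"
    by (rule moderate_operator_netI[OF X Y lin growth])
  show ?thesis
    using moderate_operator_net_moderate[OF scale Y net] gmap_gclass[OF scale X Y lin net]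
      gmap_in_gspace[OF scale X Y lin net] gmap_gadd_gscale[OF scale X Y lin net]
      continuous_map_gmap[OF scale X Y lin net]
    by blast
qed

end
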